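(* Fix $p\in(0,1)$ and $\epsilon>0$. For each $n$, let the communication graph be a single directed Erdős–Rényi random graph $G(n,p)$ on $n$ nodes, used in every round (i.e. $G_t=G_1$ for all $t$). For an algorithm $R'$, let $T^{\rm all}_n(R')$ be the number of rounds until every node has received every node's packet when all nodes run $R'$. Then $$\lim_{n\to\infty}\mathbb P\Bigl(T^{\rm all}_n(R1)>\tfrac{2(1+\epsilon)}{p}\log n\Bigr)=0,\qquad \lim_{n\to\infty}\mathbb P\Bigl(T^{\rm all}_n(R2)>\tfrac{2(1+\epsilon)}{p^2}\log n\Bigr)=0,$$ where probabilities are over the randomness of both the graph and the algorithm.
   Context: A directed Erdős–Rényi random graph $G(n,p)$ has each ordered pair $(u,v)$, $u\ne v$, present independently with probability $p$; a broadcast by $u$ in any round is received by exactly the nodes $v$ with $(u,v)$ an edge. Each node initially holds one distinct packet and broadcasts exactly one packet per round. Algorithms R1 and R2: in round 1 each node broadcasts its own packet. Each node stores all packets received. In each round $t\ge2$, each node broadcasts a packet chosen uniformly at random from (R1) the set of packets it received in round 1, or (R2) the set of all packets it received in rounds $1,\ldots,t-1$. All these random choices are mutually independent across nodes and rounds (and independent of the graph given the received sets). *)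

theory Defs
  imports "HOL-Probability.Probability"
begin

text \<open>Nodes are 0,...,n-1; node u initially holds packet u.
  A graph is an edge indicator g :: nat \<times> nat \<Rightarrow> bool; (u,v) is an edge iff g (u,v).\<close>

definition er_graph :: "nat \<Rightarrow> real \<Rightarrow> (nat \<times> nat \<Rightarrow> bool) pmf" where
  "er_graph n p = Pi_pmf {(u,v). u < n \<and> v < n \<and> u \<noteq> v} False (\<lambda>_. bernoulli_pmf p)"

datatype algo = R1 | R2

text \<open>Packets received by v in round 1 (everybody broadcasts its own packet).\<close>
definition round1_recv :: "nat \<Rightarrow> (nat \<times> nat \<Rightarrow> bool) \<Rightarrow> nat \<Rightarrow> nat set" where
  "round1_recv n g v = {u. u < n \<and> g (u, v)}"

text \<open>Set from which node u picks its broadcast packet in a round t \<ge> 2,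
  given r = packets received in rounds 1..t-1.\<close>
definition choice_set :: "algo \<Rightarrow> nat \<Rightarrow> (nat \<times> nat \<Rightarrow> bool) \<Rightarrow> (nat \<Rightarrow> nat set) \<Rightarrow> nat \<Rightarrow> nat set" where
  "choice_set a n g r u = (case a of R1 \<Rightarrow> round1_recv n g u | R2 \<Rightarrow> r u)"

definition broadcast_pmf :: "algo \<Rightarrow> nat \<Rightarrow> (nat \<times> nat \<Rightarrow> bool) \<Rightarrow> (nat \<Rightarrow> nat set) \<Rightarrow> (nat \<Rightarrow> nat) pmf" where
  "broadcast_pmf a n g r = Pi_pmf {..<n} 0
     (\<lambda>u. if choice_set a n g r u = {} then return_pmf u else pmf_of_set (choice_set a n g r u))"

text \<open>History [s_0, ..., s_k] where s_t v = set of packets received by v in rounds 1..t.\<close>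
fun history :: "algo \<Rightarrow> nat \<Rightarrow> (nat \<times> nat \<Rightarrow> bool) \<Rightarrow> nat \<Rightarrow> (nat \<Rightarrow> nat set) list pmf" where
  "history a n g 0 = return_pmf [(\<lambda>_. {})]"
| "history a n g (Suc 0) = return_pmf [(\<lambda>_. {}), round1_recv n g]"
| "history a n g (Suc (Suc k)) =
     bind_pmf (history a n g (Suc k)) (\<lambda>h.
     bind_pmf (broadcast_pmf a n g (last h)) (\<lambda>b.
     return_pmf (h @ [(\<lambda>v. last h v \<union> {b u | u. u < n \<and> g (u, v)})])))"

text \<open>Every node has every node's packet (its own packet it holds from the start).\<close>
definition all_done :: "nat \<Rightarrow> (nat \<Rightarrow> nat set) \<Rightarrow> bool" where
  "all_done n s \<longleftrightarrow> (\<forall>v<n. \<forall>u<n. u = v \<or> u \<in> s v)"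

definition prob_T_gt :: "algo \<Rightarrow> nat \<Rightarrow> real \<Rightarrow> real \<Rightarrow> real" where
  "prob_T_gt a n p x = measure_pmf.prob
     (bind_pmf (er_graph n p) (\<lambda>g. history a n g (nat \<lfloor>x\<rfloor>)))
     {h. \<not> (\<exists>k. real k \<le> x \<and> k < length h \<and> all_done n (h ! k))}"

end

theory Submission
  imports Defs
begin

text \<open>Fix the graph. In every round after the first, each relay u on a path w \<rightarrow> u \<rightarrow> v
  forwards packet w with probability at least 1 / c(u), independently of the other relays and
  rounds, where c(u) is the in-degree of u for R1 and n for R2. So v still misses w after k + 1
  rounds with probability at most q^k, with q the product of 1 - 1 / c(u) over these relays.
  Averaged over the graph, the factors of q depend on disjoint sets of edges, and a bound on
  (1 - 1/D)^m that is affine in D gives E[q^m] \<le> exp (- (n - 2) p^2 m / c (1 - 2 m / c)),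
  where c is the mean of c(u) (1 + (n - 2) p, resp. n). Since (n - 2) p^2 / c tends to
  \<rho> = p, resp. p^2, taking m \<approx> 2 (1 + \<epsilon>) ln n / \<rho> makes the union bound over the
  n^2 pairs (w, v) tend to 0.\<close>

section \<open>Discrete distributions\<close>

lemma expectation_pair_pmf_mult:
  fixes \<phi> :: "'a \<Rightarrow> real" and \<psi> :: "'b \<Rightarrow> real"
  assumes "finite (set_pmf M)" "finite (set_pmf N)"
  shows "measure_pmf.expectation (pair_pmf M N) (\<lambda>z. \<phi> (fst z) * \<psi> (snd z)) =
         measure_pmf.expectation M \<phi> * measure_pmf.expectation N \<psi>"
proof -
  have "measure_pmf.expectation (pair_pmf M N) (\<lambda>z. \<phi> (fst z) * \<psi> (snd z)) =
        (\<Sum>z\<in>set_pmf M \<times> set_pmf N. pmf (pair_pmf M N) z *\<^sub>R (\<phi> (fst z) * \<psi> (snd z)))"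
    using assms by (intro integral_measure_pmf) auto
  also have "\<dots> = (\<Sum>a\<in>set_pmf M. \<Sum>b\<in>set_pmf N. (pmf M a * \<phi> a) * (pmf N b * \<psi> b))"
    by (subst sum.cartesian_product) (auto simp: pmf_pair intro!: sum.cong)
  also have "\<dots> = (\<Sum>a\<in>set_pmf M. pmf M a * \<phi> a) * (\<Sum>b\<in>set_pmf N. pmf N b * \<psi> b)"
    by (simp add: sum_product)
  also have "\<dots> = measure_pmf.expectation M \<phi> * measure_pmf.expectation N \<psi>"
    using assms by (simp add: integral_measure_pmf[of "set_pmf M"] integral_measure_pmf[of "set_pmf N"])
  finally show ?thesis .
qed

lemma Pi_pmf_outside:
  assumes "finite A" "f \<in> set_pmf (Pi_pmf A d p)" "x \<notin> A"
  shows "f x = d"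
  using subsetD[OF set_Pi_pmf_subset[OF assms(1)] assms(2)] assms(3) by simp

lemma finite_set_Pi_pmf:
  assumes "finite A" "\<And>x. finite (set_pmf (p x))"
  shows "finite (set_pmf (Pi_pmf A d p))"
  using assms by (subst set_Pi_pmf) auto

lemma expectation_Pi_pmf_subset:
  fixes \<phi> :: "('a \<Rightarrow> 'b) \<Rightarrow> real"
  assumes "finite A" "A' \<subseteq> A" "A \<inter> S \<subseteq> A'"
    and depends: "\<And>g g'. \<forall>e\<in>S. g e = g' e \<Longrightarrow> \<phi> g = \<phi> g'"
  shows "measure_pmf.expectation (Pi_pmf A' d p) \<phi> = measure_pmf.expectation (Pi_pmf A d p) \<phi>"
proof -
  have "measure_pmf.expectation (Pi_pmf A' d p) \<phi> =
     measure_pmf.expectation (Pi_pmf A d p) (\<lambda>f. \<phi> (\<lambda>x. if x \<in> A' then f x else d))"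
    by (subst Pi_pmf_subset[OF assms(1,2)], rule integral_map_pmf)
  also have "\<dots> = measure_pmf.expectation (Pi_pmf A d p) \<phi>"
  proof (intro integral_cong_AE AE_pmfI)
    fix f assume f_in: "f \<in> set_pmf (Pi_pmf A d p)"
    have f: "f x = d" if "x \<notin> A" for x by (rule Pi_pmf_outside[OF assms(1) f_in that])
    show "\<phi> (\<lambda>x. if x \<in> A' then f x else d) = \<phi> f"
      by (rule depends) (use f assms(3) in auto)
  qed simp_all
  finally show ?thesis .
qed

lemma expectation_Pi_pmf_mult_disjoint:
  fixes \<phi> \<psi> :: "('a \<Rightarrow> 'b) \<Rightarrow> real"
  assumes fin: "finite A" "\<And>x. finite (set_pmf (p x))"
    and \<phi>: "\<And>g g'. \<forall>e\<in>S. g e = g' e \<Longrightarrow> \<phi> g = \<phi> g'"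
    and \<psi>: "\<And>g g'. \<forall>e\<in>-S. g e = g' e \<Longrightarrow> \<psi> g = \<psi> g'"
  shows "measure_pmf.expectation (Pi_pmf A d p) (\<lambda>g. \<phi> g * \<psi> g) =
         measure_pmf.expectation (Pi_pmf A d p) \<phi> * measure_pmf.expectation (Pi_pmf A d p) \<psi>"
proof -
  define A1 where "A1 = A \<inter> S"
  define A2 where "A2 = A - S"
  have A: "A = A1 \<union> A2" "A1 \<inter> A2 = {}" "finite A1" "finite A2"
    using fin(1) by (auto simp: A1_def A2_def)
  let ?P1 = "Pi_pmf A1 d p" and ?P2 = "Pi_pmf A2 d p"
  let ?merge = "\<lambda>(f, g) x. if x \<in> A1 then f x else g x"
  have "measure_pmf.expectation (Pi_pmf A d p) (\<lambda>g. \<phi> g * \<psi> g) =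
        measure_pmf.expectation (pair_pmf ?P1 ?P2) (\<lambda>z. \<phi> (?merge z) * \<psi> (?merge z))"
    by (subst A(1), subst Pi_pmf_union[OF A(3,4,2)]) simp
  also have "\<dots> = measure_pmf.expectation (pair_pmf ?P1 ?P2) (\<lambda>z. \<phi> (fst z) * \<psi> (snd z))"
  proof (intro integral_cong_AE AE_pmfI)
    fix z assume "z \<in> set_pmf (pair_pmf ?P1 ?P2)"
    then obtain f g where z: "z = (f, g)" "f \<in> set_pmf ?P1" "g \<in> set_pmf ?P2" by auto
    have f: "\<And>x. x \<notin> A1 \<Longrightarrow> f x = d" using Pi_pmf_outside[OF A(3) z(2)] by blast
    have g: "\<And>x. x \<notin> A2 \<Longrightarrow> g x = d" using Pi_pmf_outside[OF A(4) z(3)] by blast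
    have "\<phi> (?merge z) = \<phi> f" by (simp add: z, rule \<phi>) (use f g in \<open>auto simp: A2_def\<close>)
    moreover have "\<psi> (?merge z) = \<psi> g" by (simp add: z, rule \<psi>) (auto simp: A1_def)
    ultimately show "\<phi> (?merge z) * \<psi> (?merge z) = \<phi> (fst z) * \<psi> (snd z)" by (simp add: z)
  qed simp_all
  also have "\<dots> = measure_pmf.expectation ?P1 \<phi> * measure_pmf.expectation ?P2 \<psi>"
    by (rule expectation_pair_pmf_mult) (use A fin in \<open>auto intro!: finite_set_Pi_pmf\<close>)
  also have "measure_pmf.expectation ?P1 \<phi> = measure_pmf.expectation (Pi_pmf A d p) \<phi>"
    by (rule expectation_Pi_pmf_subset[OF fin(1) _ _ \<phi>]) (auto simp: A1_def)
  also have "measure_pmf.expectation ?P2 \<psi> = measure_pmf.expectation (Pi_pmf A d p) \<psi>"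
    by (rule expectation_Pi_pmf_subset[OF fin(1) _ _ \<psi>]) (auto simp: A2_def)
  finally show ?thesis .
qed

lemma expectation_Pi_pmf_prod_disjoint:
  fixes \<phi> :: "'u \<Rightarrow> ('a \<Rightarrow> 'b) \<Rightarrow> real"
  assumes fin: "finite A" "\<And>x. finite (set_pmf (p x))" and "finite U"
    and "disjoint_family_on S U"
    and "\<And>u g g'. u \<in> U \<Longrightarrow> \<forall>e\<in>S u. g e = g' e \<Longrightarrow> \<phi> u g = \<phi> u g'"
  shows "measure_pmf.expectation (Pi_pmf A d p) (\<lambda>g. \<Prod>u\<in>U. \<phi> u g) =
         (\<Prod>u\<in>U. measure_pmf.expectation (Pi_pmf A d p) (\<phi> u))"
  using assms(3-)
proof (induction U rule: finite_induct)
  case empty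
  then show ?case by simp
next
  case (insert u0 U)
  have disj: "S u \<inter> S u0 = {}" if "u \<in> U" for u
    using insert.prems(1) insert.hyps that unfolding disjoint_family_on_def by fastforce
  have "measure_pmf.expectation (Pi_pmf A d p) (\<lambda>g. \<phi> u0 g * (\<Prod>u\<in>U. \<phi> u g)) =
        measure_pmf.expectation (Pi_pmf A d p) (\<phi> u0) *
        measure_pmf.expectation (Pi_pmf A d p) (\<lambda>g. \<Prod>u\<in>U. \<phi> u g)"
  proof (rule expectation_Pi_pmf_mult_disjoint[OF fin, of "S u0"])
    show "\<phi> u0 g = \<phi> u0 g'" if "\<forall>e\<in>S u0. g e = g' e" for g g'
      using insert.prems(2) that by simp
    show "(\<Prod>u\<in>U. \<phi> u g) = (\<Prod>u\<in>U. \<phi> u g')" if "\<forall>e\<in>-S u0. g e = g' e" for g g'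
      using insert.prems(2) that disj by (intro prod.cong refl) blast
  qed
  also have "measure_pmf.expectation (Pi_pmf A d p) (\<lambda>g. \<Prod>u\<in>U. \<phi> u g) =
             (\<Prod>u\<in>U. measure_pmf.expectation (Pi_pmf A d p) (\<phi> u))"
    using insert.prems by (intro insert.IH) (auto simp: disjoint_family_on_def)
  finally show ?case using insert.hyps by simp
qed

lemma prob_bind_pmf:
  "measure_pmf.prob (bind_pmf M f) A = measure_pmf.expectation M (\<lambda>x. measure_pmf.prob (f x) A)"
proof -
  have int: "integrable (measure_pmf M) (\<lambda>x. measure_pmf.prob (f x) A)"
    by (intro measure_pmf.integrable_const_bound[of _ 1]) auto
  have "ennreal (measure_pmf.prob (bind_pmf M f) A) = emeasure (measure_pmf (bind_pmf M f)) A"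
    by (simp add: measure_pmf.emeasure_eq_measure)
  also have "\<dots> = (\<integral>\<^sup>+x. emeasure (measure_pmf (f x)) A \<partial>M)"
    by simp
  also have "\<dots> = (\<integral>\<^sup>+x. ennreal (measure_pmf.prob (f x) A) \<partial>M)"
    by (simp add: measure_pmf.emeasure_eq_measure)
  also have "\<dots> = ennreal (measure_pmf.expectation M (\<lambda>x. measure_pmf.prob (f x) A))"
    by (rule nn_integral_eq_integral[OF int]) auto
  finally show ?thesis
    by (subst (asm) ennreal_inj) (auto intro!: Bochner_Integration.integral_nonneg)
qed

lemma prob_bind_pmf_le:
  assumes "c \<ge> 0" "\<And>x. x \<in> set_pmf M \<Longrightarrow> measure_pmf.prob (f x) A \<le> c * indicator B x"
  shows "measure_pmf.prob (bind_pmf M f) A \<le> c * measure_pmf.prob M B"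
proof -
  have "measure_pmf.prob (bind_pmf M f) A \<le> measure_pmf.expectation M (\<lambda>x. c * indicator B x)"
    unfolding prob_bind_pmf
    by (intro integral_mono_AE AE_pmfI assms measure_pmf.integrable_const_bound[of _ 1]
              measure_pmf.integrable_const_bound[of _ c])
       (use assms(1) in \<open>auto simp: indicator_def\<close>)
  then show ?thesis by simp
qed

section \<open>Dissemination on a fixed graph\<close>

type_synonym graph = "nat \<times> nat \<Rightarrow> bool"

definition relay_nodes :: "nat \<Rightarrow> nat \<Rightarrow> nat \<Rightarrow> nat set" where
  "relay_nodes n w v = {u. u < n \<and> u \<noteq> w \<and> u \<noteq> v}"

text \<open>An upper bound on the size of the set from which node u picks its broadcast
  (exact for R1).\<close>

definition choice_bound :: "algo \<Rightarrow> nat \<Rightarrow> graph \<Rightarrow> nat \<Rightarrow> real" where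
  "choice_bound a n g u = (case a of R1 \<Rightarrow> real (card (round1_recv n g u)) | R2 \<Rightarrow> real n)"

definition relay_miss :: "algo \<Rightarrow> nat \<Rightarrow> graph \<Rightarrow> nat \<Rightarrow> nat \<Rightarrow> nat \<Rightarrow> real" where
  "relay_miss a n g w v u = (if g (w, u) \<and> g (u, v) then 1 - 1 / choice_bound a n g u else 1)"

text \<open>Given the graph, in every round each relay u on a path w \<rightarrow> u \<rightarrow> v independently
  forwards packet w with probability at least 1 / choice_bound, so v misses w in a round
  with probability at most miss_factor.\<close>

definition miss_factor :: "algo \<Rightarrow> nat \<Rightarrow> graph \<Rightarrow> nat \<Rightarrow> nat \<Rightarrow> real" where
  "miss_factor a n g w v = (\<Prod>u\<in>relay_nodes n w v. relay_miss a n g w v u)"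

definition received_invariant :: "nat \<Rightarrow> graph \<Rightarrow> (nat \<Rightarrow> nat set) \<Rightarrow> bool" where
  "received_invariant n g s \<longleftrightarrow> (\<forall>u<n. round1_recv n g u \<subseteq> s u \<and> s u \<subseteq> {..<n})"

lemma finite_relay_nodes [simp]: "finite (relay_nodes n w v)"
  by (simp add: relay_nodes_def)

lemma card_relay_nodes:
  assumes "w < n" "v < n" "w \<noteq> v"
  shows "card (relay_nodes n w v) = n - 2"
proof -
  have "relay_nodes n w v = {..<n} - {w, v}" by (auto simp: relay_nodes_def)
  then show ?thesis using assms by (simp add: card_Diff_subset)
qed

lemma round1_recv_subset: "round1_recv n g u \<subseteq> {..<n}"
  by (auto simp: round1_recv_def)

lemma relay_miss_nonneg: "0 \<le> relay_miss a n g w v u"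
  by (cases a) (auto simp: relay_miss_def choice_bound_def divide_le_eq)

lemma miss_factor_nonneg: "0 \<le> miss_factor a n g w v"
  unfolding miss_factor_def by (intro prod_nonneg) (simp add: relay_miss_nonneg)

lemma choice_set_subset:
  assumes "received_invariant n g s" "u < n"
  shows "choice_set a n g s u \<subseteq> {..<n}"
  using assms round1_recv_subset by (cases a) (auto simp: choice_set_def received_invariant_def)

lemma broadcast_in_range:
  assumes "received_invariant n g s" "b \<in> set_pmf (broadcast_pmf a n g s)" "u < n"
  shows "b u < n"
proof -
  let ?C = "choice_set a n g s u"
  have "b \<in> PiE_dflt {..<n} 0 (\<lambda>u. set_pmf (if choice_set a n g s u = {} then return_pmf u
                                          else pmf_of_set (choice_set a n g s u)))"
    using assms(2) unfolding broadcast_pmf_def by (subst (asm) set_Pi_pmf) (auto simp: o_def)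
  then have "b u \<in> set_pmf (if ?C = {} then return_pmf u else pmf_of_set ?C)"
    using assms(3) by (auto simp: PiE_dflt_def)
  moreover have "finite ?C" using choice_set_subset[OF assms(1,3)] finite_subset by blast
  ultimately show ?thesis
    using choice_set_subset[OF assms(1,3)] assms(3) by (auto split: if_splits)
qed

lemma history_length_invariant:
  "h \<in> set_pmf (history a n g (Suc k)) \<Longrightarrow> length h = k + 2 \<and> received_invariant n g (last h)"
proof (induction k arbitrary: h)
  case 0
  then show ?case by (auto simp: received_invariant_def round1_recv_subset)
next
  case (Suc k)
  from Suc.prems obtain h0 b where h0: "h0 \<in> set_pmf (history a n g (Suc k))"
    and b: "b \<in> set_pmf (broadcast_pmf a n g (last h0))"
    and h: "h = h0 @ [(\<lambda>v. last h0 v \<union> {b u | u. u < n \<and> g (u, v)})]"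
    by auto
  have IH: "length h0 = k + 2" "received_invariant n g (last h0)" using Suc.IH[OF h0] by auto
  have "received_invariant n g (\<lambda>v. last h0 v \<union> {b u | u. u < n \<and> g (u, v)})"
    using IH(2) broadcast_in_range[OF IH(2) b] unfolding received_invariant_def by auto
  then show ?case using IH h by simp
qed

lemma prob_pmf_of_set_avoids:
  assumes "finite C" "w \<in> C"
  shows "measure_pmf.prob (pmf_of_set C) (-{w}) = 1 - 1 / real (card C)"
proof -
  have ne: "C \<noteq> {}" and "card C \<ge> 1" using assms by (auto simp: Suc_le_eq card_gt_0_iff)
  moreover have "card (C \<inter> -{w}) = card C - 1" using assms
    by (metis Diff_eq card_Diff_singleton)
  ultimately show ?thesis using measure_pmf_of_set[OF ne assms(1)]
    by (simp add: of_nat_diff field_simps)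
qed

lemma prob_choice_avoids_le:
  fixes a :: algo
  assumes inv: "received_invariant n g s" and "u < n" "w < n" "g (w, u)"
  defines "C \<equiv> choice_set a n g s u"
  shows "measure_pmf.prob (if C = {} then return_pmf u else pmf_of_set C) (-{w})
           \<le> 1 - 1 / choice_bound a n g u"
proof -
  have C_sub: "C \<subseteq> {..<n}" unfolding C_def by (rule choice_set_subset[OF inv \<open>u < n\<close>])
  have "w \<in> round1_recv n g u" using assms(3,4) by (simp add: round1_recv_def)
  then have w_in: "w \<in> C" using inv \<open>u < n\<close>
    by (cases a) (auto simp: C_def choice_set_def received_invariant_def)
  have fin: "finite C" using C_sub finite_subset by blast
  then have "card C > 0" using w_in card_gt_0_iff by blast
  moreover have "real (card C) \<le> choice_bound a n g u"
  proof (cases a)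
    case R2
    have "card C \<le> card {..<n}" using C_sub by (intro card_mono) auto
    then show ?thesis using R2 by (simp add: choice_bound_def)
  qed (simp add: C_def choice_set_def choice_bound_def)
  ultimately show ?thesis using w_in fin by (auto simp: prob_pmf_of_set_avoids frac_le)
qed

lemma prob_broadcast_misses_le:
  assumes inv: "received_invariant n g s" and wv: "w < n" "v < n" "w \<noteq> v"
  shows "measure_pmf.prob (broadcast_pmf a n g s)
           {b. w \<notin> s v \<union> {b u | u. u < n \<and> g (u, v)}} \<le> miss_factor a n g w v"
proof -
  define P where "P u \<longleftrightarrow> u \<in> relay_nodes n w v \<and> g (w, u) \<and> g (u, v)" for u
  define B where "B u = (if P u then -{w} else UNIV)" for u
  let ?F = "\<lambda>u. if choice_set a n g s u = {} then return_pmf u else pmf_of_set (choice_set a n g s u)"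
  have "measure_pmf.prob (broadcast_pmf a n g s) {b. w \<notin> s v \<union> {b u | u. u < n \<and> g (u, v)}}
        \<le> measure_pmf.prob (broadcast_pmf a n g s) (Pi {..<n} B)"
    by (intro measure_pmf.finite_measure_mono) (auto simp: B_def P_def relay_nodes_def)
  also have "\<dots> = (\<Prod>u<n. measure_pmf.prob (?F u) (B u))"
    unfolding broadcast_pmf_def by (rule measure_Pi_pmf_Pi) simp
  also have "\<dots> \<le> (\<Prod>u<n. if P u then relay_miss a n g w v u else 1)"
    using prob_choice_avoids_le[OF inv _ wv(1)]
    by (intro prod_mono) (auto simp: B_def P_def relay_miss_def relay_nodes_def)
  also have "\<dots> = miss_factor a n g w v"
    unfolding miss_factor_def prod.If_cases[OF finite_lessThan]
    by (simp, rule prod.mono_neutral_left) (auto simp: P_def relay_nodes_def relay_miss_def)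
  finally show ?thesis .
qed

lemma prob_history_misses_le:
  assumes wv: "w < n" "v < n" "w \<noteq> v"
  shows "measure_pmf.prob (history a n g (Suc k)) {h. w \<notin> last h v} \<le> miss_factor a n g w v ^ k"
proof (induction k)
  case (Suc k)
  have "measure_pmf.prob (history a n g (Suc (Suc k))) {h. w \<notin> last h v}
        \<le> miss_factor a n g w v * measure_pmf.prob (history a n g (Suc k)) {h. w \<notin> last h v}"
    unfolding history.simps
  proof (rule prob_bind_pmf_le[OF miss_factor_nonneg])
    fix h assume "h \<in> set_pmf (history a n g (Suc k))"
    then have inv: "received_invariant n g (last h)" using history_length_invariant by blast
    show "measure_pmf.prob (broadcast_pmf a n g (last h) \<bind>
            (\<lambda>b. return_pmf (h @ [\<lambda>v. last h v \<union> {b u |u. u < n \<and> g (u, v)}]))) {h. w \<notin> last h v}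
          \<le> miss_factor a n g w v * indicator {h. w \<notin> last h v} h"
      using prob_broadcast_misses_le[OF inv wv]
      by (cases "w \<in> last h v") (simp_all add: map_pmf_def[symmetric] vimage_def)
  qed
  also have "\<dots> \<le> miss_factor a n g w v * miss_factor a n g w v ^ k"
    by (intro mult_left_mono Suc.IH miss_factor_nonneg)
  finally show ?case by simp
qed simp

section \<open>Averaging over the random graph\<close>

lemma exp_neg_le_one_minus_mult:
  fixes z T :: real
  assumes "0 \<le> z" "z \<le> T" "T \<le> 1"
  shows "exp (- z) \<le> 1 - z * (1 - T)"
proof -
  have "exp (- z) = inverse (exp z)" by (simp add: exp_minus)
  also have "\<dots> \<le> inverse (1 + z)"
    using assms(1) exp_ge_add_one_self[of z] by (intro le_imp_inverse_le) auto
  also have "\<dots> \<le> 1 - z * (1 - T)"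
  proof -
    have "z * (1 - T) \<le> T * (1 - T)" using assms by (intro mult_right_mono) auto
    also have "\<dots> \<le> T" using assms by (intro mult_left_le) auto
    finally have "z * (1 - T) \<le> T" .
    then have "0 \<le> z * (T - z * (1 - T))" using assms(1) by simp
    then have "1 \<le> (1 - z * (1 - T)) * (1 + z)" by (simp add: algebra_simps)
    then show ?thesis using assms(1) by (simp add: field_simps)
  qed
  finally show ?thesis .
qed

text \<open>The right-hand side is affine in D, so its mean only needs the mean of D.\<close>

lemma one_minus_inverse_power_le:
  fixes D c :: real and m :: nat
  assumes D: "D \<ge> 1" and c: "c > 0" and mc: "2 * real m \<le> c"
  shows "(1 - 1 / D) ^ m \<le> 1 - (1 - 2 * real m / c) * real m * (2 / c - D / c^2)"
proof -
  define T where "T = 2 * real m / c"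
  define y where "y = m / D"
  define l where "l = m * (2 / c - D / c^2)"
  have T: "0 \<le> T" "T \<le> 1" using c mc by (auto simp: T_def)
  have y: "0 \<le> y" using D by (simp add: y_def)
  have "y - l = m * (c - D)^2 / (D * c^2)"
    using D c by (simp add: y_def l_def field_simps power2_eq_square)
  also have "\<dots> \<ge> 0" using D c by (intro divide_nonneg_pos mult_nonneg_nonneg) auto
  finally have ly: "l \<le> y" by simp
  have "0 \<le> m * (D / c^2)" using D c by simp
  moreover have "l = 2 * real m / c - real m * (D / c^2)" by (simp add: l_def right_diff_distrib)
  ultimately have lT: "l \<le> T" by (simp add: T_def)
  have "(1 - 1 / D) ^ m \<le> exp (- (1 / D)) ^ m"
    using D exp_ge_add_one_self[of "- (1 / D)"] by (intro power_mono) auto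
  also have "\<dots> = exp (- y)" by (simp add: y_def exp_of_nat_mult[symmetric])
  also have "\<dots> \<le> 1 - min y T * (1 - T)"
  proof (cases "y \<le> T")
    case True
    then show ?thesis using exp_neg_le_one_minus_mult[OF y True T(2)] by simp
  next
    case False
    have "exp (- y) \<le> exp (- T)" using False by simp
    also have "\<dots> \<le> 1 - T * (1 - T)" using exp_neg_le_one_minus_mult[OF T(1) order_refl T(2)] .
    finally show ?thesis using False by simp
  qed
  also have "\<dots> \<le> 1 - l * (1 - T)"
    using ly lT T by (intro diff_left_mono mult_right_mono) auto
  finally show ?thesis by (simp add: T_def l_def mult_ac)
qed

definition edge_slots :: "nat \<Rightarrow> (nat \<times> nat) set" where
  "edge_slots n = {(u, v). u < n \<and> v < n \<and> u \<noteq> v}"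

lemma finite_edge_slots [simp]: "finite (edge_slots n)"
  by (rule finite_subset[of _ "{..<n} \<times> {..<n}"]) (auto simp: edge_slots_def)

lemma card_edge_slots_le: "card (edge_slots n) \<le> n^2"
proof -
  have "card (edge_slots n) \<le> card ({..<n} \<times> {..<n})"
    by (rule card_mono) (auto simp: edge_slots_def)
  then show ?thesis by (simp add: power2_eq_square)
qed

lemma er_graph_eq_Pi_pmf: "er_graph n p = Pi_pmf (edge_slots n) False (\<lambda>_. bernoulli_pmf p)"
  by (simp add: er_graph_def edge_slots_def)

lemma finite_set_pmf_er_graph: "finite (set_pmf (er_graph n p))"
  unfolding er_graph_eq_Pi_pmf by (rule finite_set_Pi_pmf) auto

lemma er_graph_no_loops: "g \<in> set_pmf (er_graph n p) \<Longrightarrow> \<not> g (u, u)"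
  unfolding er_graph_eq_Pi_pmf using Pi_pmf_outside[OF finite_edge_slots]
  by (fastforce simp: edge_slots_def)

lemma integrable_er_graph [simp]: "integrable (measure_pmf (er_graph n p)) (f :: _ \<Rightarrow> real)"
  by (rule integrable_measure_pmf_finite[OF finite_set_pmf_er_graph])

lemma expectation_er_graph_edges:
  assumes "E \<subseteq> edge_slots n" "0 \<le> p" "p \<le> 1"
  shows "measure_pmf.expectation (er_graph n p) (\<lambda>g. \<Prod>e\<in>E. of_bool (g e) :: real) = p ^ card E"
proof -
  define f where "f e y = (if e \<in> E then of_bool y else 1 :: real)" for e y
  have "(\<Prod>e\<in>E. of_bool (g e) :: real) = (\<Prod>e\<in>edge_slots n. f e (g e))" for g
    using assms(1) by (intro prod.mono_neutral_cong_left) (auto simp: f_def)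
  then have "measure_pmf.expectation (er_graph n p) (\<lambda>g. \<Prod>e\<in>E. of_bool (g e) :: real)
      = (\<Prod>e\<in>edge_slots n. measure_pmf.expectation (bernoulli_pmf p) (f e))"
    unfolding er_graph_eq_Pi_pmf
    by (simp, intro expectation_prod_Pi_pmf) (auto simp: f_def intro!: integrable_measure_pmf_finite)
  also have "\<dots> = (\<Prod>e\<in>edge_slots n. if e \<in> E then p else 1)"
    using assms(2,3) by (intro prod.cong refl) (auto simp: f_def integral_measure_pmf[of UNIV] UNIV_bool)
  also have "\<dots> = p ^ card E"
    using assms(1) by (simp add: prod.If_cases Int_absorb1)
  finally show ?thesis .
qed

text \<open>The mean of choice_bound at a relay u given the edges w \<rightarrow> u \<rightarrow> v: for R1 it is
  the in-degree of u, that is 1 + Binomial(n - 2, p).\<close>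

definition relay_choice_mean :: "algo \<Rightarrow> nat \<Rightarrow> real \<Rightarrow> real" where
  "relay_choice_mean a n p = (case a of R1 \<Rightarrow> 1 + real (n - 2) * p | R2 \<Rightarrow> real n)"

lemma relay_choice_mean_pos: "0 \<le> p \<Longrightarrow> 0 < n \<Longrightarrow> 0 < relay_choice_mean a n p"
  by (cases a) (auto simp: relay_choice_mean_def add_pos_nonneg)

lemma expectation_path:
  assumes "0 \<le> p" "p \<le> 1" "w < n" "v < n" "w \<noteq> v" "u \<in> relay_nodes n w v"
  shows "measure_pmf.expectation (er_graph n p) (\<lambda>g. of_bool (g (w, u) \<and> g (u, v)) :: real) = p^2"
proof -
  have E: "{(w, u), (u, v)} \<subseteq> edge_slots n" "card {(w, u), (u, v)} = 2"
    using assms by (auto simp: relay_nodes_def edge_slots_def)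
  have "(\<lambda>g. of_bool (g (w, u) \<and> g (u, v)) :: real) = (\<lambda>g. \<Prod>e\<in>{(w, u), (u, v)}. of_bool (g e))"
    using assms(6) by (simp add: fun_eq_iff relay_nodes_def)
  then show ?thesis using expectation_er_graph_edges[OF E(1) assms(1,2)] E(2) by simp
qed

lemma choice_bound_R1_eq_in_degree:
  assumes "g \<in> set_pmf (er_graph n p)"
  shows "choice_bound R1 n g u = (\<Sum>x\<in>{..<n} - {u}. of_bool (g (x, u)))"
proof -
  have "round1_recv n g u = ({..<n} - {u}) \<inter> {x. g (x, u)}"
    using er_graph_no_loops[OF assms, of u] by (auto simp: round1_recv_def)
  then show ?thesis by (simp add: choice_bound_def)
qed

lemma expectation_path_in_edge:
  assumes p: "0 \<le> p" "p \<le> 1" and wv: "w < n" "v < n" "w \<noteq> v" and u: "u \<in> relay_nodes n w v"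
    and x: "x < n" "x \<noteq> u" "x \<noteq> w"
  shows "measure_pmf.expectation (er_graph n p)
           (\<lambda>g. of_bool (g (w, u) \<and> g (u, v)) * of_bool (g (x, u)) :: real) = p^3"
proof -
  have E: "{(w, u), (u, v), (x, u)} \<subseteq> edge_slots n" "card {(w, u), (u, v), (x, u)} = 3"
    using x wv u by (auto simp: relay_nodes_def edge_slots_def)
  have "(\<lambda>g. of_bool (g (w, u) \<and> g (u, v)) * of_bool (g (x, u)) :: real)
          = (\<lambda>g. \<Prod>e\<in>{(w, u), (u, v), (x, u)}. of_bool (g e))"
    using x u by (simp add: fun_eq_iff relay_nodes_def)
  then show ?thesis using expectation_er_graph_edges[OF E(1) p] E(2) by simp
qed

lemma expectation_path_choice_bound:
  assumes p: "0 \<le> p" "p \<le> 1" and wv: "w < n" "v < n" "w \<noteq> v" and u: "u \<in> relay_nodes n w v"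
  shows "measure_pmf.expectation (er_graph n p)
           (\<lambda>g. of_bool (g (w, u) \<and> g (u, v)) * choice_bound a n g u) = p^2 * relay_choice_mean a n p"
proof (cases a)
  case R2
  then show ?thesis using expectation_path[OF assms]
    by (simp add: choice_bound_def relay_choice_mean_def)
next
  case R1
  let ?X = "\<lambda>g. of_bool (g (w, u) \<and> g (u, v)) :: real"
  let ?others = "{..<n} - {u, w}"
  have split: "{..<n} - {u} = insert w ?others" using wv u by (auto simp: relay_nodes_def)
  have "?X g * choice_bound R1 n g u = ?X g + (\<Sum>x\<in>?others. ?X g * of_bool (g (x, u)))"
    if "g \<in> set_pmf (er_graph n p)" for g
    unfolding choice_bound_R1_eq_in_degree[OF that] split
    by (simp add: sum_distrib_left del: sum_of_bool_eq sum_mult_of_bool_eq sum_of_bool_mult_eq)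
  then have "measure_pmf.expectation (er_graph n p) (\<lambda>g. ?X g * choice_bound a n g u)
      = measure_pmf.expectation (er_graph n p) (\<lambda>g. ?X g + (\<Sum>x\<in>?others. ?X g * of_bool (g (x, u))))"
    unfolding R1 by (intro integral_cong_AE AE_pmfI) simp_all
  also have "\<dots> = measure_pmf.expectation (er_graph n p) ?X +
        (\<Sum>x\<in>?others. measure_pmf.expectation (er_graph n p) (\<lambda>g. ?X g * of_bool (g (x, u))))"
    by (simp only: Bochner_Integration.integral_add[OF integrable_er_graph integrable_er_graph]
                   Bochner_Integration.integral_sum[OF integrable_er_graph])
  also have "\<dots> = p^2 + real (n - 2) * p^3"
  proof -
    have "card ?others = n - 2"
      using wv u by (subst card_Diff_subset) (auto simp: relay_nodes_def)
    then show ?thesis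
      using expectation_path[OF assms] expectation_path_in_edge[OF assms] by simp
  qed
  finally show ?thesis using R1
    by (simp add: relay_choice_mean_def algebra_simps power2_eq_square power3_eq_cube)
qed

lemma relay_miss_power_le:
  assumes "w < n" "c > 0" "2 * real m \<le> c"
  shows "relay_miss a n g w v u ^ m \<le>
           1 - of_bool (g (w, u) \<and> g (u, v)) * ((1 - 2 * real m / c) * real m * (2 / c - choice_bound a n g u / c^2))"
proof (cases "g (w, u) \<and> g (u, v)")
  case True
  have "choice_bound a n g u \<ge> 1"
  proof (cases a)
    case R1
    have "w \<in> round1_recv n g u" using True assms(1) by (simp add: round1_recv_def)
    then have "card (round1_recv n g u) \<noteq> 0"
      using finite_subset[OF round1_recv_subset finite_lessThan] by auto
    then show ?thesis using R1 by (simp add: choice_bound_def)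
  qed (use assms(1) in \<open>simp add: choice_bound_def\<close>)
  then show ?thesis using True one_minus_inverse_power_le[OF _ assms(2,3)]
    by (simp add: relay_miss_def)
next
  case False
  then show ?thesis by (simp add: relay_miss_def False)
qed

lemma expectation_relay_miss_power_le:
  assumes p: "0 \<le> p" "p \<le> 1" and wv: "w < n" "v < n" "w \<noteq> v" and u: "u \<in> relay_nodes n w v"
    and c: "c = relay_choice_mean a n p" and mc: "2 * real m \<le> c"
  shows "measure_pmf.expectation (er_graph n p) (\<lambda>g. relay_miss a n g w v u ^ m)
           \<le> 1 - p^2 * ((1 - 2 * real m / c) * real m / c)"
proof -
  have c_pos: "c > 0" using relay_choice_mean_pos[OF p(1)] wv(1) by (simp add: c)
  define K where "K = (1 - 2 * real m / c) * real m"
  let ?X = "\<lambda>g. of_bool (g (w, u) \<and> g (u, v)) :: real"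
  have affine: "1 - ?X g * (K * (2 / c - choice_bound a n g u / c^2))
      = 1 - K * (2 / c) * ?X g + K / c^2 * (?X g * choice_bound a n g u)" for g
    by (simp add: algebra_simps)
  have "measure_pmf.expectation (er_graph n p) (\<lambda>g. relay_miss a n g w v u ^ m)
      \<le> measure_pmf.expectation (er_graph n p)
          (\<lambda>g. 1 - K * (2 / c) * ?X g + K / c^2 * (?X g * choice_bound a n g u))"
  proof (intro integral_mono)
    fix g
    have "relay_miss a n g w v u ^ m \<le> 1 - ?X g * (K * (2 / c - choice_bound a n g u / c^2))"
      unfolding K_def by (rule relay_miss_power_le[OF wv(1) c_pos mc])
    then show "relay_miss a n g w v u ^ m
        \<le> 1 - K * (2 / c) * ?X g + K / c^2 * (?X g * choice_bound a n g u)"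
      by (simp only: affine)
  qed simp_all
  also have "\<dots> = 1 - K * (2 / c) * p^2 + K / c^2 * (p^2 * c)"
    using expectation_path[OF p wv u] expectation_path_choice_bound[OF p wv u] by (simp add: c)
  also have "\<dots> = 1 - p^2 * (K / c)"
    using c_pos by (simp add: field_simps power2_eq_square)
  finally show ?thesis by (simp add: K_def)
qed

text \<open>The factors of miss_factor for different relays u depend on the disjoint edge sets
  {x \<rightarrow> u} \<union> {u \<rightarrow> v}, hence are independent.\<close>

lemma expectation_miss_factor_power_le:
  assumes p: "0 \<le> p" "p \<le> 1" and wv: "w < n" "v < n" "w \<noteq> v"
    and c: "c = relay_choice_mean a n p" and mc: "2 * real m \<le> c"
  shows "measure_pmf.expectation (er_graph n p) (\<lambda>g. miss_factor a n g w v ^ m)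
           \<le> exp (- (real (n - 2) * p^2 * ((1 - 2 * real m / c) * real m / c)))"
proof -
  define \<delta> where "\<delta> = p^2 * ((1 - 2 * real m / c) * real m / c)"
  define S where "S u = {e. snd e = u} \<union> {(u, v)}" for u :: nat
  have "measure_pmf.expectation (er_graph n p) (\<lambda>g. miss_factor a n g w v ^ m)
      = (\<Prod>u\<in>relay_nodes n w v. measure_pmf.expectation (er_graph n p) (\<lambda>g. relay_miss a n g w v u ^ m))"
    unfolding miss_factor_def prod_power_distrib er_graph_eq_Pi_pmf
  proof (rule expectation_Pi_pmf_prod_disjoint)
    show "disjoint_family_on S (relay_nodes n w v)"
      by (auto simp: disjoint_family_on_def S_def relay_nodes_def)
    show "relay_miss a n g w v u ^ m = relay_miss a n g' w v u ^ m"
      if "u \<in> relay_nodes n w v" "\<forall>e\<in>S u. g e = g' e" for u g g'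
    proof -
      have "round1_recv n g u = round1_recv n g' u" using that(2) by (auto simp: round1_recv_def S_def)
      then have "choice_bound a n g u = choice_bound a n g' u"
        by (cases a) (simp_all add: choice_bound_def)
      then show ?thesis using that(2) by (simp add: relay_miss_def S_def)
    qed
  qed simp_all
  also have "\<dots> \<le> (\<Prod>u\<in>relay_nodes n w v. exp (- \<delta>))"
  proof (intro prod_mono conjI)
    fix u assume u: "u \<in> relay_nodes n w v"
    show "0 \<le> measure_pmf.expectation (er_graph n p) (\<lambda>g. relay_miss a n g w v u ^ m)"
      by (intro Bochner_Integration.integral_nonneg zero_le_power relay_miss_nonneg)
    show "measure_pmf.expectation (er_graph n p) (\<lambda>g. relay_miss a n g w v u ^ m) \<le> exp (- \<delta>)"
      using expectation_relay_miss_power_le[OF p wv u c mc] exp_ge_add_one_self[of "- \<delta>"]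
      by (simp add: \<delta>_def)
  qed
  also have "\<dots> = exp (- (real (n - 2) * \<delta>))"
    by (simp add: card_relay_nodes[OF wv] exp_of_nat_mult[symmetric])
  finally show ?thesis by (simp add: \<delta>_def mult.assoc)
qed

lemma prob_history_not_done_le:
  "measure_pmf.prob (history a n g (Suc m)) {h. \<not> all_done n (last h)}
     \<le> (\<Sum>e\<in>edge_slots n. miss_factor a n g (fst e) (snd e) ^ m)"
proof -
  have "{h. \<not> all_done n (last h)} = (\<Union>e\<in>edge_slots n. {h. fst e \<notin> last h (snd e)})"
    by (force simp: all_done_def edge_slots_def)
  then have "measure_pmf.prob (history a n g (Suc m)) {h. \<not> all_done n (last h)}
      \<le> (\<Sum>e\<in>edge_slots n. measure_pmf.prob (history a n g (Suc m)) {h. fst e \<notin> last h (snd e)})"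
    by (simp add: measure_UNION_le)
  also have "\<dots> \<le> (\<Sum>e\<in>edge_slots n. miss_factor a n g (fst e) (snd e) ^ m)"
    by (intro sum_mono prob_history_misses_le) (auto simp: edge_slots_def)
  finally show ?thesis .
qed

lemma prob_history_not_done_by_le:
  assumes "real (Suc m) \<le> x"
  shows "measure_pmf.prob (history a n g (Suc m))
           {h. \<not> (\<exists>k. real k \<le> x \<and> k < length h \<and> all_done n (h ! k))}
         \<le> measure_pmf.prob (history a n g (Suc m)) {h. \<not> all_done n (last h)}"
proof -
  let ?H = "history a n g (Suc m)"
  have "{h. \<not> (\<exists>k. real k \<le> x \<and> k < length h \<and> all_done n (h ! k))} \<inter> set_pmf ?H
          \<subseteq> {h. \<not> all_done n (last h)}"
  proof
    fix h assume h: "h \<in> {h. \<not> (\<exists>k. real k \<le> x \<and> k < length h \<and> all_done n (h ! k))} \<inter> set_pmf ?H"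
    then have "h \<in> set_pmf ?H" by blast
    then have len: "length h = Suc (Suc m)" using history_length_invariant by simp
    then have "last h = h ! Suc m" by (cases h rule: rev_cases) (auto simp: nth_append)
    then show "h \<in> {h. \<not> all_done n (last h)}" using h len assms by auto
  qed
  then show ?thesis
    by (subst measure_Int_set_pmf[symmetric]) (rule measure_pmf.finite_measure_mono, auto)
qed

lemma prob_T_gt_le:
  assumes x: "nat \<lfloor>x\<rfloor> = Suc m" and p: "0 \<le> p" "p \<le> 1"
    and c: "c = relay_choice_mean a n p" and mc: "2 * real m \<le> c"
  shows "prob_T_gt a n p x \<le> real n ^ 2 * exp (- (real (n - 2) * p^2 * ((1 - 2 * real m / c) * real m / c)))"
proof -
  let ?bound = "exp (- (real (n - 2) * p^2 * ((1 - 2 * real m / c) * real m / c)))"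
  have m: "real (Suc m) \<le> x" using x by linarith
  have "prob_T_gt a n p x = measure_pmf.expectation (er_graph n p) (\<lambda>g. measure_pmf.prob
          (history a n g (Suc m)) {h. \<not> (\<exists>k. real k \<le> x \<and> k < length h \<and> all_done n (h ! k))})"
    unfolding prob_T_gt_def x by (rule prob_bind_pmf)
  also have "\<dots> \<le> measure_pmf.expectation (er_graph n p)
                     (\<lambda>g. \<Sum>e\<in>edge_slots n. miss_factor a n g (fst e) (snd e) ^ m)"
    by (intro integral_mono order_trans[OF prob_history_not_done_by_le[OF m] prob_history_not_done_le])
       simp_all
  also have "\<dots> = (\<Sum>e\<in>edge_slots n. measure_pmf.expectation (er_graph n p)
                                      (\<lambda>g. miss_factor a n g (fst e) (snd e) ^ m))"
    by (rule Bochner_Integration.integral_sum) simp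
  also have "\<dots> \<le> (\<Sum>e\<in>edge_slots n. ?bound)"
    using expectation_miss_factor_power_le[OF p _ _ _ c mc] by (intro sum_mono) (auto simp: edge_slots_def)
  also have "\<dots> \<le> real n ^ 2 * ?bound"
    using card_edge_slots_le[of n] by (simp add: mult_right_mono flip: of_nat_power)
  finally show ?thesis .
qed

lemma prob_T_gt_le_exp:
  assumes p: "0 \<le> p" "p \<le> 1" and x: "2 \<le> x" and c: "c = relay_choice_mean a n p" and xc: "2 * x \<le> c"
  shows "prob_T_gt a n p x \<le> real n ^ 2 * exp (- (real (n - 2) * p^2 / c * (1 - 2 * x / c) * (x - 2)))"
proof -
  define m where "m = nat \<lfloor>x\<rfloor> - 1"
  have floor_x: "nat \<lfloor>x\<rfloor> = Suc m" using x by (simp add: m_def)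
  have m: "real m \<le> x" "x - 2 \<le> real m" using floor_x x by linarith+
  have c_pos: "c > 0" using x xc by linarith
  have mc: "2 * real m \<le> c" using m xc by linarith
  have "real (n - 2) * p^2 / c * (1 - 2 * x / c) * (x - 2)
      \<le> real (n - 2) * p^2 / c * (1 - 2 * real m / c) * real m"
  proof (rule mult_mono)
    have A: "0 \<le> real (n - 2) * p^2 / c" using c_pos by simp
    have "1 - 2 * x / c \<le> 1 - 2 * real m / c" using m c_pos by (simp add: divide_right_mono)
    then show "real (n - 2) * p^2 / c * (1 - 2 * x / c) \<le> real (n - 2) * p^2 / c * (1 - 2 * real m / c)"
      by (rule mult_left_mono[OF _ A])
    have "0 \<le> 1 - 2 * real m / c" using mc c_pos by (simp add: field_simps)
    then show "0 \<le> real (n - 2) * p^2 / c * (1 - 2 * real m / c)"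
      by (rule mult_nonneg_nonneg[OF A])
  qed (use m x in simp_all)
  then have "exp (- (real (n - 2) * p^2 * ((1 - 2 * real m / c) * real m / c)))
      \<le> exp (- (real (n - 2) * p^2 / c * (1 - 2 * x / c) * (x - 2)))"
    by (simp add: field_simps)
  then show ?thesis
    using prob_T_gt_le[OF floor_x p c mc] by (meson mult_left_mono order_trans zero_le_power2 of_nat_0_le_iff)
qed

section \<open>Asymptotics\<close>

lemma ln_real_at_top: "filterlim (\<lambda>n::nat. ln (real n)) at_top sequentially"
  by (rule filterlim_compose[OF ln_at_top filterlim_real_sequentially])

text \<open>With x = \<kappa> ln n and \<rho> \<kappa> = 2 (1 + \<epsilon>), the exponent exceeds (2 + \<epsilon>) ln n
  eventually, which beats the n^2 from the union bound.\<close>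

lemma union_bound_tendsto_zero:
  fixes c r :: "nat \<Rightarrow> real"
  assumes \<rho>: "\<rho> > 0" and \<epsilon>: "\<epsilon> > 0" and \<kappa>: "\<kappa> = 2 * (1 + \<epsilon>) / \<rho>"
    and r: "r \<longlonglongrightarrow> \<rho>" and lc: "(\<lambda>n. ln (real n) / c n) \<longlonglongrightarrow> 0"
  shows "(\<lambda>n. real n ^ 2 * exp (- (r n * (1 - 2 * (\<kappa> * ln (real n)) / c n) * (\<kappa> * ln (real n) - 2))))
           \<longlonglongrightarrow> 0"
proof -
  define \<Phi> where "\<Phi> n = r n * (1 - 2 * (\<kappa> * ln (real n)) / c n) * (\<kappa> * ln (real n) - 2)" for n
  have ln_pos: "eventually (\<lambda>n. ln (real n) > 0) sequentially"
    using ln_real_at_top by (simp add: filterlim_at_top_dense)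
  have "(\<lambda>n. r n * (1 - 2 * \<kappa> * (ln (real n) / c n)) * (\<kappa> - 2 / ln (real n)))
          \<longlonglongrightarrow> \<rho> * (1 - 2 * \<kappa> * 0) * (\<kappa> - 0)"
    by (intro tendsto_intros r lc tendsto_divide_0[OF tendsto_const]
          filterlim_at_top_imp_at_infinity[OF ln_real_at_top])
  then have lim: "(\<lambda>n. r n * (1 - 2 * \<kappa> * (ln (real n) / c n)) * (\<kappa> - 2 / ln (real n)))
                   \<longlonglongrightarrow> 2 * (1 + \<epsilon>)"
    using \<rho> by (simp add: \<kappa>)
  have "(\<lambda>n. \<Phi> n / ln (real n)) \<longlonglongrightarrow> 2 * (1 + \<epsilon>)"
  proof (rule Lim_transform_eventually[OF lim])
    show "eventually (\<lambda>n. r n * (1 - 2 * \<kappa> * (ln (real n) / c n)) * (\<kappa> - 2 / ln (real n))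
            = \<Phi> n / ln (real n)) sequentially"
      using ln_pos by eventually_elim (simp add: \<Phi>_def field_simps)
  qed
  moreover have "2 + \<epsilon> < 2 * (1 + \<epsilon>)" using \<epsilon> by simp
  ultimately have "eventually (\<lambda>n. \<Phi> n / ln (real n) > 2 + \<epsilon>) sequentially"
    by (rule order_tendstoD)
  then have bound: "eventually (\<lambda>n. real n ^ 2 * exp (- \<Phi> n) \<le> exp (- (\<epsilon> * ln (real n)))) sequentially"
    using ln_pos eventually_gt_at_top[of 0]
  proof eventually_elim
    case (elim n)
    have "\<Phi> n > (2 + \<epsilon>) * ln (real n)" using elim by (simp add: field_simps)
    then have le: "real n ^ 2 * exp (- \<Phi> n) \<le> real n ^ 2 * exp (- ((2 + \<epsilon>) * ln (real n)))"
      by (intro mult_left_mono) auto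
    have "real n ^ 2 = exp (2 * ln (real n))"
      using elim by (subst exp_double) simp
    then have "real n ^ 2 * exp (- ((2 + \<epsilon>) * ln (real n))) = exp (- (\<epsilon> * ln (real n)))"
      by (simp add: exp_add[symmetric] algebra_simps)
    with le show ?case by simp
  qed
  have "(\<lambda>n. exp (- (\<epsilon> * ln (real n)))) \<longlonglongrightarrow> 0"
  proof -
    have "filterlim (\<lambda>n. \<epsilon> * ln (real n)) at_top sequentially"
      by (rule filterlim_tendsto_pos_mult_at_top[OF tendsto_const \<epsilon> ln_real_at_top])
    then have "filterlim (\<lambda>n. - (\<epsilon> * ln (real n))) at_bot sequentially"
      by (simp add: filterlim_uminus_at_top)
    then show ?thesis by (rule filterlim_compose[OF exp_at_bot])
  qed
  then have "(\<lambda>n. real n ^ 2 * exp (- \<Phi> n)) \<longlonglongrightarrow> 0"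
    by (intro tendsto_sandwich[OF _ bound tendsto_const]) simp_all
  then show ?thesis by (simp add: \<Phi>_def)
qed

lemma prob_T_gt_tendsto_zero:
  assumes p: "0 \<le> p" "p \<le> 1" and \<epsilon>: "\<epsilon> > 0" and \<rho>: "\<rho> > 0"
    and r: "(\<lambda>n. real (n - 2) * p^2 / relay_choice_mean a n p) \<longlonglongrightarrow> \<rho>"
    and lc: "(\<lambda>n. ln (real n) / relay_choice_mean a n p) \<longlonglongrightarrow> 0"
  shows "(\<lambda>n. prob_T_gt a n p (2 * (1 + \<epsilon>) / \<rho> * ln (real n))) \<longlonglongrightarrow> 0"
proof -
  define \<kappa> where "\<kappa> = 2 * (1 + \<epsilon>) / \<rho>"
  define x where "x n = \<kappa> * ln (real n)" for n
  define c where "c n = relay_choice_mean a n p" for n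
  have "\<kappa> > 0" using \<epsilon> \<rho> by (simp add: \<kappa>_def)
  then have "filterlim x at_top sequentially"
    unfolding x_def by (rule filterlim_tendsto_pos_mult_at_top[OF tendsto_const _ ln_real_at_top])
  then have large: "eventually (\<lambda>n. x n \<ge> 2) sequentially" by (simp add: filterlim_at_top)
  have "(\<lambda>n. \<kappa> * (ln (real n) / c n)) \<longlonglongrightarrow> \<kappa> * 0"
    using lc unfolding c_def by (intro tendsto_intros)
  then have small: "eventually (\<lambda>n. \<kappa> * (ln (real n) / c n) < 1 / 2) sequentially"
    by (rule order_tendstoD(2)) simp
  have c_pos: "eventually (\<lambda>n. c n > 0) sequentially"
    using eventually_gt_at_top[of 0] by eventually_elim (simp add: c_def relay_choice_mean_pos p)
  from large small c_pos have bound: "eventually (\<lambda>n. prob_T_gt a n p (x n)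
      \<le> real n ^ 2 * exp (- (real (n - 2) * p^2 / c n * (1 - 2 * x n / c n) * (x n - 2)))) sequentially"
  proof eventually_elim
    case (elim n)
    then have "2 * x n \<le> c n" by (simp add: x_def field_simps)
    then show ?case using prob_T_gt_le_exp[OF p] elim by (simp add: c_def)
  qed
  have "(\<lambda>n. real n ^ 2 * exp (- (real (n - 2) * p^2 / c n * (1 - 2 * x n / c n) * (x n - 2))))
          \<longlonglongrightarrow> 0"
    using union_bound_tendsto_zero[OF \<rho> \<epsilon> \<kappa>_def r[folded c_def] lc[folded c_def]] by (simp add: x_def)
  then have "(\<lambda>n. prob_T_gt a n p (x n)) \<longlonglongrightarrow> 0"
    by (intro tendsto_sandwich[OF _ bound tendsto_const]) (simp_all add: prob_T_gt_def)
  then show ?thesis by (simp add: x_def \<kappa>_def)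
qed

lemma tendsto_relay_rate_R1:
  assumes "0 < p"
  shows "(\<lambda>n. real (n - 2) * p^2 / relay_choice_mean R1 n p) \<longlonglongrightarrow> p"
proof -
  have "filterlim (\<lambda>n::nat. real (n - 2)) at_top sequentially"
    by (rule filterlim_compose[OF filterlim_real_sequentially filterlim_minus_const_nat_at_top])
  then have "(\<lambda>n. p^2 / (inverse (real (n - 2)) + p)) \<longlonglongrightarrow> p^2 / (0 + p)"
    using assms by (intro tendsto_intros tendsto_inverse_0_at_top) simp_all
  then have lim: "(\<lambda>n. p^2 / (inverse (real (n - 2)) + p)) \<longlonglongrightarrow> p"
    using assms by (simp add: power2_eq_square)
  show ?thesis
  proof (rule Lim_transform_eventually[OF lim])
    show "eventually (\<lambda>n. p^2 / (inverse (real (n - 2)) + p) = real (n - 2) * p^2 / relay_choice_mean R1 n p)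
            sequentially"
      using eventually_ge_at_top[of 3]
      by eventually_elim (use assms in \<open>simp add: relay_choice_mean_def field_simps\<close>)
  qed
qed

lemma tendsto_ln_over_relay_choice_mean_R1:
  assumes "0 < p"
  shows "(\<lambda>n. ln (real n) / relay_choice_mean R1 n p) \<longlonglongrightarrow> 0"
proof (rule tendsto_sandwich[OF _ _ tendsto_const])
  show "(\<lambda>n. 2 / p * (ln (real n) / real n)) \<longlonglongrightarrow> 0"
    using tendsto_mult[OF tendsto_const[of "2 / p"] lim_ln_over_n] by simp
  show "eventually (\<lambda>n. 0 \<le> ln (real n) / relay_choice_mean R1 n p) sequentially"
    using eventually_ge_at_top[of 1]
    by eventually_elim (use assms in \<open>auto intro!: divide_nonneg_pos relay_choice_mean_pos\<close>)
  show "eventually (\<lambda>n. ln (real n) / relay_choice_mean R1 n p \<le> 2 / p * (ln (real n) / real n)) sequentially"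
    using eventually_ge_at_top[of 4]
  proof eventually_elim
    case (elim n)
    have "p * 4 \<le> p * real n" using elim assms by (intro mult_left_mono) auto
    then have "real n * p / 2 \<le> 1 + (real n - 2) * p" by (simp add: field_simps)
    then have den: "real n * p / 2 \<le> relay_choice_mean R1 n p"
      using elim by (simp add: relay_choice_mean_def of_nat_diff)
    have "ln (real n) / relay_choice_mean R1 n p \<le> ln (real n) / (real n * p / 2)"
      using elim assms den relay_choice_mean_pos[of p n R1] by (intro divide_left_mono) auto
    also have "\<dots> = 2 / p * (ln (real n) / real n)" using assms elim by (simp add: field_simps)
    finally show ?case .
  qed
qed

lemma tendsto_relay_rate_R2: "(\<lambda>n. real (n - 2) * p^2 / relay_choice_mean R2 n p) \<longlonglongrightarrow> p^2"
proof -
  have "(\<lambda>n. p^2 * (1 - 2 * (1 / real n))) \<longlonglongrightarrow> p^2 * (1 - 2 * 0)"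
    by (intro tendsto_intros lim_inverse_n')
  then have "(\<lambda>n. p^2 * (1 - 2 * (1 / real n))) \<longlonglongrightarrow> p^2" by simp
  then show ?thesis
    by (rule Lim_transform_eventually[OF _ eventually_mono[OF eventually_ge_at_top[of 2]]])
       (simp_all add: relay_choice_mean_def of_nat_diff field_simps)
qed

theorem theorem1:
  fixes p \<epsilon> :: real
  assumes "0 < p" "p < 1" "\<epsilon> > 0"
  shows "(\<lambda>n. prob_T_gt R1 n p (2 * (1 + \<epsilon>) / p * ln (real n))) \<longlonglongrightarrow> 0 \<and>
         (\<lambda>n. prob_T_gt R2 n p (2 * (1 + \<epsilon>) / p^2 * ln (real n))) \<longlonglongrightarrow> 0"
proof
  have p: "0 \<le> p" "p \<le> 1" using assms by simp_all
  show "(\<lambda>n. prob_T_gt R1 n p (2 * (1 + \<epsilon>) / p * ln (real n))) \<longlonglongrightarrow> 0"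
    using assms by (intro prob_T_gt_tendsto_zero[OF p] tendsto_relay_rate_R1 tendsto_ln_over_relay_choice_mean_R1)
  show "(\<lambda>n. prob_T_gt R2 n p (2 * (1 + \<epsilon>) / p^2 * ln (real n))) \<longlonglongrightarrow> 0"
    using assms lim_ln_over_n
    by (intro prob_T_gt_tendsto_zero[OF p] tendsto_relay_rate_R2) (simp_all add: relay_choice_mean_def)
qed

end
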